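(* Let $M$ be a set of $m$ sources and $N$ a set of $n$ sinks, let $\mathbf{d}:M\to\mathbb{Z}_{\ge0}$ satisfy $n = 1+\sum_{\mu}\mathbf{d}(\mu)$, and let $P_{\mathbf{d}}$ be the transportation polytope with supply $\mathbf{m}(\mu)=1+m\,\mathbf{d}(\mu)$ and demand $\mathbf{n}(\nu)=m$. If at least two sources $\mu$ satisfy $\mathbf{d}(\mu)\ge 1$, then $P_{\mathbf{d}}$ has exactly $mn$ facets.
   Context: The transportation polytope with supply $\mathbf{m}$ and demand $\mathbf{n}$ (equal totals) is $\{x\in\mathbb{R}_{\ge0}^{M\times N} : \sum_\nu x_{\mu,\nu}=\mathbf{m}(\mu)\ \forall\mu,\ \sum_\mu x_{\mu,\nu}=\mathbf{n}(\nu)\ \forall\nu\}$. *)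

theory Defs
  imports "HOL-Analysis.Analysis"
begin

definition transportation_polytope ::
  "('m::finite \<Rightarrow> real) \<Rightarrow> ('n::finite \<Rightarrow> real) \<Rightarrow> (real ^ ('m \<times> 'n)) set" where
  "transportation_polytope sm dn =
     {x. (\<forall>\<mu> \<nu>. 0 \<le> x $ (\<mu>, \<nu>)) \<and>
         (\<forall>\<mu>. (\<Sum>\<nu>\<in>UNIV. x $ (\<mu>, \<nu>)) = sm \<mu>) \<and>
         (\<forall>\<nu>. (\<Sum>\<mu>\<in>UNIV. x $ (\<mu>, \<nu>)) = dn \<nu>)}"

end

theory Submission imports Defs begin

text \<open>
  The transportation polytope is the intersection of an affine subspace with the
  nonnegative orthant, so its only candidate facets are the coordinate sections
  \<open>x\<^sub>\<mu>\<^sub>\<nu> = 0\<close>. Each of these is a genuine facet, and they are pairwise distinct,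
  as soon as for every cell \<open>(\<mu>\<^sub>0, \<nu>\<^sub>0)\<close> there is a transportation plan vanishing at
  that cell and positive everywhere else. Such a plan exists whenever the supply
  at \<open>\<mu>\<^sub>0\<close> and the demand at \<open>\<nu>\<^sub>0\<close> together fall short of the total; for the margins
  \<open>1 + m d(\<mu>)\<close> and \<open>m\<close> this is where the two sources with positive \<open>d\<close> are needed.
\<close>

lemma exists_extrapolation_pos:
  fixes p q :: "real ^ 'i"
  assumes "\<And>k. k \<noteq> i \<Longrightarrow> 0 < p $ k"
  obtains t where "0 < t" "\<And>k. k \<noteq> i \<Longrightarrow> 0 < (1 + t) * p $ k - t * q $ k"
proof -
  have "\<forall>\<^sub>F t in at_right 0. 0 < (1 + t) * p $ k - t * q $ k" if "k \<noteq> i" for k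
  proof -
    have "((\<lambda>t. (1 + t) * p $ k - t * q $ k) \<longlongrightarrow> (1 + 0) * p $ k - 0 * q $ k) (at_right 0)"
      by (intro tendsto_intros)
    then show ?thesis
      using assms[OF that] by (auto dest: order_tendstoD)
  qed
  then have "\<forall>\<^sub>F t in at_right 0. 0 < t \<and> (\<forall>k\<in>UNIV - {i}. 0 < (1 + t) * p $ k - t * q $ k)"
    by (intro eventually_conj eventually_at_right_less eventually_ball_finite) auto
  then obtain t where "0 < t" "\<forall>k\<in>UNIV - {i}. 0 < (1 + t) * p $ k - t * q $ k"
    using eventually_happens' trivial_limit_at_right_real by blast
  with that show ?thesis by blast
qed

text \<open>On the line from \<open>q\<close> through \<open>p\<close>, points slightly beyond \<open>p\<close> violate only the
  constraint \<open>x $ i \<ge> 0\<close>, so this constraint cannot be dropped.\<close>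

lemma orthant_constraint_irredundant:
  fixes S :: "(real ^ 'i) set"
  assumes "p \<in> S" "p $ i = 0" "\<And>k. k \<noteq> i \<Longrightarrow> 0 < p $ k"
    and "q \<in> S" "0 < q $ i"
  obtains z where "z \<in> affine hull S" "z $ i < 0" "\<And>k. k \<noteq> i \<Longrightarrow> 0 \<le> z $ k"
proof -
  obtain t where t: "0 < t" "\<And>k. k \<noteq> i \<Longrightarrow> 0 < (1 + t) * p $ k - t * q $ k"
    using exists_extrapolation_pos assms(3) by blast
  define z where "z = (1 + t) *\<^sub>R p + (- t) *\<^sub>R q"
  have "z \<in> affine hull S"
    unfolding z_def by (rule mem_affine) (use assms hull_inc in auto)
  moreover have "z $ i < 0"
    using assms t by (simp add: z_def)
  moreover have "0 \<le> z $ k" if "k \<noteq> i" for k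
    using t(2)[OF that] by (simp add: z_def)
  ultimately show ?thesis using that by blast
qed

lemma facet_of_affine_Int_orthant:
  fixes S A :: "(real ^ 'i) set"
  assumes S: "S = A \<inter> {x. \<forall>i. 0 \<le> x $ i}" and "affine A"
    and wit: "\<And>i. \<exists>p\<in>S. p $ i = 0 \<and> (\<forall>k. k \<noteq> i \<longrightarrow> 0 < p $ k)"
    and two: "\<exists>i j :: 'i. i \<noteq> j"
  shows "C facet_of S \<longleftrightarrow> (\<exists>i. C = S \<inter> {x. x $ i = 0})"
proof -
  define H where "H = (\<lambda>i. {x :: real ^ 'i. 0 \<le> x $ i})"
  have inj_H: "inj H"
  proof (rule injI)
    fix i j assume "H i = H j"
    then have "- axis i 1 \<in> H i \<longleftrightarrow> - axis i 1 \<in> H j" by simp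
    then show "i = j" by (auto simp: H_def axis_def split: if_splits)
  qed
  define a where "a = (\<lambda>h. - axis (inv H h) 1 :: real ^ 'i)"
  have a_H: "a (H i) = - axis i 1" for i
    using inj_H by (simp add: a_def)
  have "affine hull S \<subseteq> A"
    using S \<open>affine A\<close> by (simp add: hull_minimal)
  then have S_eq: "S = affine hull S \<inter> \<Inter>(range H)"
    using hull_subset[of S affine] S by (auto simp: H_def)
  have "a (H i) \<noteq> 0 \<and> H i = {x. a (H i) \<bullet> x \<le> 0}" for i
    unfolding a_H by (auto simp: H_def inner_axis')
  then have halfspace: "a h \<noteq> 0 \<and> h = {x. a h \<bullet> x \<le> 0}" if "h \<in> range H" for h
    using that by blast
  have irredundant: "S \<subset> affine hull S \<inter> \<Inter>F'" if F'_sub: "F' \<subset> range H" for F'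
  proof -
    obtain i where "H i \<notin> F'"
      using F'_sub by blast
    then have F': "F' \<subseteq> H ` (UNIV - {i})"
      using F'_sub by blast
    obtain p where p: "p \<in> S" "p $ i = 0" "\<And>k. k \<noteq> i \<Longrightarrow> 0 < p $ k"
      using wit by blast
    obtain j where "j \<noteq> i"
      using two by metis
    obtain q where q: "q \<in> S" "\<And>k. k \<noteq> j \<Longrightarrow> 0 < q $ k"
      using wit by blast
    obtain z where z: "z \<in> affine hull S" "z $ i < 0" "\<And>k. k \<noteq> i \<Longrightarrow> 0 \<le> z $ k"
      using orthant_constraint_irredundant[OF p q(1)] q(2) \<open>j \<noteq> i\<close> by metis
    have "z \<in> affine hull S \<inter> \<Inter>F'" "z \<notin> S"
      using z F' S by (auto simp: H_def not_le)
    then show ?thesis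
      using S_eq F'_sub by blast
  qed
  have "C facet_of S \<longleftrightarrow> (\<exists>h. h \<in> range H \<and> C = S \<inter> {x. a h \<bullet> x = 0})"
    by (rule facet_of_polyhedron_explicit[OF _ S_eq halfspace irredundant]) auto
  then show ?thesis
    by (auto simp: a_H inner_axis')
qed

lemma card_facets_affine_Int_orthant:
  fixes S A :: "(real ^ 'i) set"
  assumes "S = A \<inter> {x. \<forall>i. 0 \<le> x $ i}" and "affine A"
    and wit: "\<And>i. \<exists>p\<in>S. p $ i = 0 \<and> (\<forall>k. k \<noteq> i \<longrightarrow> 0 < p $ k)"
    and "\<exists>i j :: 'i. i \<noteq> j"
  shows "card {C. C facet_of S} = CARD('i)"
proof -
  define G where "G = (\<lambda>i. S \<inter> {x :: real ^ 'i. x $ i = 0})"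
  have "{C. C facet_of S} = range G"
    using facet_of_affine_Int_orthant[OF assms] by (auto simp: G_def)
  moreover have "inj G"
  proof (rule injI)
    fix i j assume "G i = G j"
    obtain p where p: "p \<in> S" "p $ i = 0" "\<And>k. k \<noteq> i \<Longrightarrow> 0 < p $ k"
      using wit by blast
    then have "p \<in> G j"
      using \<open>G i = G j\<close> by (auto simp: G_def)
    then show "i = j"
      using p(3) by (force simp: G_def)
  qed
  ultimately show ?thesis
    by (simp add: card_image)
qed

definition transportation_plane ::
  "('m::finite \<Rightarrow> real) \<Rightarrow> ('n::finite \<Rightarrow> real) \<Rightarrow> (real ^ ('m \<times> 'n)) set" where
  "transportation_plane sm dn =
     {x. (\<forall>\<mu>. (\<Sum>\<nu>\<in>UNIV. x $ (\<mu>, \<nu>)) = sm \<mu>) \<and> (\<forall>\<nu>. (\<Sum>\<mu>\<in>UNIV. x $ (\<mu>, \<nu>)) = dn \<nu>)}"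

lemma transportation_polytope_eq:
  "transportation_polytope sm dn = transportation_plane sm dn \<inter> {x. \<forall>i. 0 \<le> x $ i}"
  by (auto simp: transportation_polytope_def transportation_plane_def)

lemma affine_transportation_plane: "affine (transportation_plane sm dn)"
proof -
  have row: "(\<Sum>\<nu>\<in>UNIV. ((1 - u) *\<^sub>R x + u *\<^sub>R y) $ (\<mu>, \<nu>)) =
      (1 - u) * (\<Sum>\<nu>\<in>UNIV. x $ (\<mu>, \<nu>)) + u * (\<Sum>\<nu>\<in>UNIV. y $ (\<mu>, \<nu>))" for \<mu> x y u
    by (simp add: sum.distrib sum_distrib_left)
  have col: "(\<Sum>\<mu>\<in>UNIV. ((1 - u) *\<^sub>R x + u *\<^sub>R y) $ (\<mu>, \<nu>)) =
      (1 - u) * (\<Sum>\<mu>\<in>UNIV. x $ (\<mu>, \<nu>)) + u * (\<Sum>\<mu>\<in>UNIV. y $ (\<mu>, \<nu>))" for \<nu> x y u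
    by (simp add: sum.distrib sum_distrib_left)
  show ?thesis
    unfolding affine_alt transportation_plane_def
    by (simp only: row col mem_Collect_eq) (simp add: algebra_simps)
qed

text \<open>A plan with total \<open>T\<close> vanishing at \<open>(\<mu>\<^sub>0, \<nu>\<^sub>0)\<close>: row \<open>\<mu>\<^sub>0\<close> and column \<open>\<nu>\<^sub>0\<close>
  are filled proportionally to the opposite margins, the remaining block by a
  rank-one matrix with the residual margins.\<close>

definition vanishing_plan ::
  "real \<Rightarrow> ('m \<Rightarrow> real) \<Rightarrow> ('n \<Rightarrow> real) \<Rightarrow> 'm \<Rightarrow> 'n \<Rightarrow> 'm \<Rightarrow> 'n \<Rightarrow> real" where
  "vanishing_plan T s t \<mu>\<^sub>0 \<nu>\<^sub>0 \<mu> \<nu> =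
     (if \<mu> = \<mu>\<^sub>0 \<and> \<nu> = \<nu>\<^sub>0 then 0
      else if \<mu> = \<mu>\<^sub>0 then s \<mu>\<^sub>0 * t \<nu> / (T - t \<nu>\<^sub>0)
      else if \<nu> = \<nu>\<^sub>0 then t \<nu>\<^sub>0 * s \<mu> / (T - s \<mu>\<^sub>0)
      else (T - s \<mu>\<^sub>0 - t \<nu>\<^sub>0) * s \<mu> * t \<nu> / ((T - s \<mu>\<^sub>0) * (T - t \<nu>\<^sub>0)))"

lemma vanishing_plan_transpose:
  "vanishing_plan T s t \<mu>\<^sub>0 \<nu>\<^sub>0 \<mu> \<nu> = vanishing_plan T t s \<nu>\<^sub>0 \<mu>\<^sub>0 \<nu> \<mu>"
  by (simp add: vanishing_plan_def algebra_simps)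

lemma vanishing_plan_row_sum:
  fixes t :: "'n::finite \<Rightarrow> real"
  assumes "(\<Sum>\<nu>\<in>UNIV. t \<nu>) = T" "T \<noteq> s \<mu>\<^sub>0" "T \<noteq> t \<nu>\<^sub>0"
  shows "(\<Sum>\<nu>\<in>UNIV. vanishing_plan T s t \<mu>\<^sub>0 \<nu>\<^sub>0 \<mu> \<nu>) = s \<mu>"
proof (cases "\<mu> = \<mu>\<^sub>0")
  case True
  define c where "c = s \<mu>\<^sub>0 / (T - t \<nu>\<^sub>0)"
  have "vanishing_plan T s t \<mu>\<^sub>0 \<nu>\<^sub>0 \<mu> = (\<lambda>\<nu>. if \<nu> = \<nu>\<^sub>0 then 0 else c * t \<nu>)"
    using True by (auto simp: vanishing_plan_def c_def)
  then have "(\<Sum>\<nu>\<in>UNIV. vanishing_plan T s t \<mu>\<^sub>0 \<nu>\<^sub>0 \<mu> \<nu>) = c * (T - t \<nu>\<^sub>0)"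
    using assms(1) by (simp add: sum.delta_remove sum_diff1 sum_distrib_left[symmetric] algebra_simps)
  then show ?thesis
    using True assms(3) by (simp add: c_def)
next
  case False
  define c where "c = (T - s \<mu>\<^sub>0 - t \<nu>\<^sub>0) * s \<mu> / ((T - s \<mu>\<^sub>0) * (T - t \<nu>\<^sub>0))"
  have "vanishing_plan T s t \<mu>\<^sub>0 \<nu>\<^sub>0 \<mu> =
      (\<lambda>\<nu>. if \<nu> = \<nu>\<^sub>0 then t \<nu>\<^sub>0 * s \<mu> / (T - s \<mu>\<^sub>0) else c * t \<nu>)"
    using False by (auto simp: vanishing_plan_def c_def)
  then have "(\<Sum>\<nu>\<in>UNIV. vanishing_plan T s t \<mu>\<^sub>0 \<nu>\<^sub>0 \<mu> \<nu>) =
      t \<nu>\<^sub>0 * s \<mu> / (T - s \<mu>\<^sub>0) + c * (T - t \<nu>\<^sub>0)"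
    using assms(1) by (simp add: sum.delta_remove sum_diff1 sum_distrib_left[symmetric] algebra_simps)
  also have "c * (T - t \<nu>\<^sub>0) = (T - s \<mu>\<^sub>0 - t \<nu>\<^sub>0) * s \<mu> / (T - s \<mu>\<^sub>0)"
    using assms(3) by (simp add: c_def)
  also have "t \<nu>\<^sub>0 * s \<mu> / (T - s \<mu>\<^sub>0) + \<dots> = (T - s \<mu>\<^sub>0) * s \<mu> / (T - s \<mu>\<^sub>0)"
    by (simp add: add_divide_distrib[symmetric] algebra_simps)
  finally show ?thesis
    using assms(2) by simp
qed

lemma vanishing_plan_pos:
  assumes "\<And>\<mu>. 0 < s \<mu>" "\<And>\<nu>. 0 < t \<nu>" "s \<mu>\<^sub>0 + t \<nu>\<^sub>0 < T" "(\<mu>, \<nu>) \<noteq> (\<mu>\<^sub>0, \<nu>\<^sub>0)"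
  shows "0 < vanishing_plan T s t \<mu>\<^sub>0 \<nu>\<^sub>0 \<mu> \<nu>"
proof -
  have "0 < T - s \<mu>\<^sub>0" "0 < T - t \<nu>\<^sub>0" "0 < T - s \<mu>\<^sub>0 - t \<nu>\<^sub>0"
    using assms(1)[of \<mu>\<^sub>0] assms(2)[of \<nu>\<^sub>0] assms(3) by linarith+
  then show ?thesis
    using assms(1)[of \<mu>] assms(2)[of \<nu>] assms(1)[of \<mu>\<^sub>0] assms(2)[of \<nu>\<^sub>0] assms(4)
    by (auto simp: vanishing_plan_def)
qed

lemma transportation_polytope_point_vanishing_at:
  fixes sm :: "'m::finite \<Rightarrow> real" and dn :: "'n::finite \<Rightarrow> real"
  assumes "\<And>\<mu>. 0 < sm \<mu>" "\<And>\<nu>. 0 < dn \<nu>"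
    and "(\<Sum>\<mu>\<in>UNIV. sm \<mu>) = T" "(\<Sum>\<nu>\<in>UNIV. dn \<nu>) = T"
    and "sm \<mu>\<^sub>0 + dn \<nu>\<^sub>0 < T"
  shows "\<exists>p\<in>transportation_polytope sm dn.
           p $ (\<mu>\<^sub>0, \<nu>\<^sub>0) = 0 \<and> (\<forall>k. k \<noteq> (\<mu>\<^sub>0, \<nu>\<^sub>0) \<longrightarrow> 0 < p $ k)"
proof -
  define p :: "real ^ ('m \<times> 'n)"
    where "p = (\<chi> k. vanishing_plan T sm dn \<mu>\<^sub>0 \<nu>\<^sub>0 (fst k) (snd k))"
  have T: "T \<noteq> sm \<mu>\<^sub>0" "T \<noteq> dn \<nu>\<^sub>0"
    using assms(1)[of \<mu>\<^sub>0] assms(2)[of \<nu>\<^sub>0] assms(5) by auto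
  have pos: "0 < p $ k" if "k \<noteq> (\<mu>\<^sub>0, \<nu>\<^sub>0)" for k
    using vanishing_plan_pos[of sm dn, OF assms(1,2,5)] that by (cases k) (simp add: p_def)
  have "0 \<le> p $ k" for k
    using pos[of k] by (cases "k = (\<mu>\<^sub>0, \<nu>\<^sub>0)") (auto simp: p_def vanishing_plan_def)
  moreover have "(\<Sum>\<nu>\<in>UNIV. p $ (\<mu>, \<nu>)) = sm \<mu>" for \<mu>
    using vanishing_plan_row_sum[of dn T sm \<mu>\<^sub>0 \<nu>\<^sub>0, OF assms(4) T] by (simp add: p_def)
  moreover have "(\<Sum>\<mu>\<in>UNIV. p $ (\<mu>, \<nu>)) = dn \<nu>" for \<nu>
    using vanishing_plan_row_sum[of sm T dn \<nu>\<^sub>0 \<mu>\<^sub>0, OF assms(3) T(2,1)]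
    by (simp add: p_def vanishing_plan_transpose[of T sm])
  ultimately have "p \<in> transportation_polytope sm dn"
    by (simp add: transportation_polytope_def)
  moreover have "p $ (\<mu>\<^sub>0, \<nu>\<^sub>0) = 0"
    by (simp add: p_def vanishing_plan_def)
  ultimately show ?thesis
    using pos by blast
qed

theorem lemma4p3:
  fixes d :: "'m::finite \<Rightarrow> nat"
  assumes "CARD('n::finite) = 1 + (\<Sum>\<mu>\<in>UNIV. d \<mu>)"
    and "\<exists>\<mu>1 \<mu>2. \<mu>1 \<noteq> \<mu>2 \<and> d \<mu>1 \<ge> 1 \<and> d \<mu>2 \<ge> 1"
  shows "card {F. F facet_of
            (transportation_polytope
               (\<lambda>\<mu>. 1 + real CARD('m) * real (d \<mu>))
               (\<lambda>\<nu>::'n. real CARD('m)))}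
         = CARD('m) * CARD('n)"
proof -
  define m where "m = real CARD('m)"
  define s where "s = (\<lambda>\<mu>. 1 + m * real (d \<mu>))"
  let ?P = "transportation_polytope s (\<lambda>\<nu>::'n. m)"
  obtain \<mu>1 \<mu>2 where \<mu>12: "\<mu>1 \<noteq> \<mu>2" "1 \<le> d \<mu>1" "1 \<le> d \<mu>2"
    using assms(2) by blast
  have "card {\<mu>1, \<mu>2} \<le> CARD('m)"
    by (rule card_mono) auto
  then have m2: "2 \<le> m"
    using \<mu>12(1) by (simp add: m_def)
  have total: "(\<Sum>\<mu>\<in>UNIV. s \<mu>) = m * real CARD('n)"
    using assms(1) by (simp add: s_def m_def sum.distrib sum_distrib_left algebra_simps)
  have short: "s \<mu>\<^sub>0 + m < m * real CARD('n)" for \<mu>\<^sub>0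
  proof -
    obtain \<mu>' where "\<mu>' \<noteq> \<mu>\<^sub>0" "1 \<le> d \<mu>'"
      using \<mu>12 by metis
    then have "d \<mu>\<^sub>0 + 1 \<le> (\<Sum>\<mu>\<in>{\<mu>\<^sub>0, \<mu>'}. d \<mu>)"
      by simp
    also have "\<dots> \<le> (\<Sum>\<mu>\<in>UNIV. d \<mu>)"
      by (rule sum_mono2) auto
    finally have "d \<mu>\<^sub>0 + 2 \<le> CARD('n)"
      using assms(1) by simp
    then have "m * (real (d \<mu>\<^sub>0) + 2) \<le> m * real CARD('n)"
      using m2 by (intro mult_left_mono) auto
    then show ?thesis
      using m2 by (simp add: s_def algebra_simps)
  qed
  have vanishing: "\<exists>p\<in>?P. p $ k = 0 \<and> (\<forall>k'. k' \<noteq> k \<longrightarrow> 0 < p $ k')" for k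
  proof (cases k)
    case (Pair \<mu>\<^sub>0 \<nu>\<^sub>0)
    have "0 < s \<mu>" for \<mu>
      using m2 by (simp add: s_def add_pos_nonneg)
    then show ?thesis
      using transportation_polytope_point_vanishing_at[of s "\<lambda>_ :: 'n. m", OF _ _ total _ short]
        m2 Pair by simp
  qed
  have "\<exists>k k' :: 'm \<times> 'n. k \<noteq> k'"
    using \<mu>12(1) by blast
  from card_facets_affine_Int_orthant[OF transportation_polytope_eq affine_transportation_plane
      vanishing this]
  show ?thesis
    by (simp add: s_def m_def)
qed

end
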